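(* Let $T$ be a set (of traits) with a binary relation $\preceq$ on $T$, and for every link $k$ and every $t\in T$ let $t\oplus k\subseteq T$ be a set of traits. Assume that for all $t_i,t_j\in T$ and every link $k$: if $t_i\preceq t_j$ then for every $t\in t_j\oplus k$ there exists $t'\in t_i\oplus k$ with $t'\preceq t$. Fix a link $k$ leaving the common end node of the two routes, and for a label $l=(t_1,t_2)$ whose both routes end at that node let $l\oplus e=\{(t,t_2): t\in t_1\oplus k\}\cup\{(t,t_1): t\in t_2\oplus k\}$ (the link may be appended to either route; the extended route's trait is listed first, and afterwards the routes end at different nodes). Let $l_i=(t_i,t'_i)$ and $l_j=(t_j,t'_j)$ be such labels. If $l_i\preceq_= l_j$, then for every $l\in l_j\oplus e$ there exists $l'\in l_i\oplus e$ with $l'\preceq_{\ne} l$.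
   Context: Setting: a network with nodes and links; a trait records the information needed to set up a connection along a route; $t\oplus k$ is the set of traits derived by appending link $k$ to a route with trait $t$; $\preceq$ means "better than or equal to". A label is a pair of traits of two link-disjoint routes. For labels $l_i=(t_i,t'_i)$, $l_j=(t_j,t'_j)$ whose both routes end at the same node: $l_i\preceq_n l_j$ iff $t_i\preceq t_j$ and $t'_i\preceq t'_j$; $l_i\preceq_x l_j$ iff $t_i\preceq t'_j$ and $t'_i\preceq t_j$; $l_i\preceq_= l_j$ iff $l_i\preceq_n l_j$ or $l_i\preceq_x l_j$. For labels $(a,b)$, $(c,d)$ whose routes end at different nodes: $(a,b)\preceq_{\ne}(c,d)$ iff $a\preceq c$ and $b\preceq d$. *)

theory Defs
  imports Main
begin

text \<open>Labels are pairs of traits. le is the relation "better than or equal to" on traits,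
  ext t k is the set of traits t (+) k.\<close>

definition label_le_n :: "('a \<Rightarrow> 'a \<Rightarrow> bool) \<Rightarrow> 'a \<times> 'a \<Rightarrow> 'a \<times> 'a \<Rightarrow> bool" where
  "label_le_n le li lj \<longleftrightarrow> le (fst li) (fst lj) \<and> le (snd li) (snd lj)"

definition label_le_x :: "('a \<Rightarrow> 'a \<Rightarrow> bool) \<Rightarrow> 'a \<times> 'a \<Rightarrow> 'a \<times> 'a \<Rightarrow> bool" where
  "label_le_x le li lj \<longleftrightarrow> le (fst li) (snd lj) \<and> le (snd li) (fst lj)"

definition label_le_eq :: "('a \<Rightarrow> 'a \<Rightarrow> bool) \<Rightarrow> 'a \<times> 'a \<Rightarrow> 'a \<times> 'a \<Rightarrow> bool" where
  "label_le_eq le li lj \<longleftrightarrow> label_le_n le li lj \<or> label_le_x le li lj"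

definition label_le_ne :: "('a \<Rightarrow> 'a \<Rightarrow> bool) \<Rightarrow> 'a \<times> 'a \<Rightarrow> 'a \<times> 'a \<Rightarrow> bool" where
  "label_le_ne le l1 l2 \<longleftrightarrow> le (fst l1) (fst l2) \<and> le (snd l1) (snd l2)"

definition label_ext :: "('a \<Rightarrow> 'k \<Rightarrow> 'a set) \<Rightarrow> 'a \<times> 'a \<Rightarrow> 'k \<Rightarrow> ('a \<times> 'a) set" where
  "label_ext ext l k = {(t, snd l) | t. t \<in> ext (fst l) k} \<union> {(t, fst l) | t. t \<in> ext (snd l) k}"

end

theory Submission
  imports Defs
begin

text \<open>A crossed comparison is a straight comparison with the routes of the better label swapped,
  and swapping the routes of a label does not change its extensions; so the case \<open>\<preceq>\<^sub>x\<close>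
  reduces to the case \<open>\<preceq>\<^sub>n\<close>, where each extension of \<open>l\<^sub>j\<close> is matched by extending the
  corresponding route of \<open>l\<^sub>i\<close>.\<close>

lemma label_le_x_iff_label_le_n_swap:
  "label_le_x le li lj \<longleftrightarrow> label_le_n le (prod.swap li) lj"
  by (auto simp: label_le_x_def label_le_n_def)

lemma label_ext_swap [simp]: "label_ext ext (prod.swap l) k = label_ext ext l k"
  by (auto simp: label_ext_def)

lemma label_ext_dominated_if_label_le_n:
  assumes mono: "\<And>ti tj t. ti \<in> T \<Longrightarrow> tj \<in> T \<Longrightarrow> le ti tj \<Longrightarrow> t \<in> ext tj k \<Longrightarrow>
                   \<exists>t' \<in> ext ti k. le t' t"
    and li_T: "fst li \<in> T" "snd li \<in> T"
    and lj_T: "fst lj \<in> T" "snd lj \<in> T"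
    and le_n: "label_le_n le li lj"
  shows "\<forall>l \<in> label_ext ext lj k. \<exists>l' \<in> label_ext ext li k. label_le_ne le l' l"
proof
  fix l assume "l \<in> label_ext ext lj k"
  then consider t where "l = (t, snd lj)" "t \<in> ext (fst lj) k"
    | t where "l = (t, fst lj)" "t \<in> ext (snd lj) k"
    by (auto simp: label_ext_def)
  then show "\<exists>l' \<in> label_ext ext li k. label_le_ne le l' l"
  proof cases
    case (1 t)
    obtain t' where "t' \<in> ext (fst li) k" "le t' t"
      using mono[OF li_T(1) lj_T(1)] le_n 1 by (auto simp: label_le_n_def)
    with 1 le_n show ?thesis
      by (intro bexI[of _ "(t', snd li)"]) (auto simp: label_ext_def label_le_ne_def label_le_n_def)
  next
    case (2 t)
    obtain t' where "t' \<in> ext (snd li) k" "le t' t"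
      using mono[OF li_T(2) lj_T(2)] le_n 2 by (auto simp: label_le_n_def)
    with 2 le_n show ?thesis
      by (intro bexI[of _ "(t', fst li)"]) (auto simp: label_ext_def label_le_ne_def label_le_n_def)
  qed
qed

theorem proposition3:
  fixes T :: "'a set" and le :: "'a \<Rightarrow> 'a \<Rightarrow> bool" and ext :: "'a \<Rightarrow> 'k \<Rightarrow> 'a set"
    and k :: 'k and li lj :: "'a \<times> 'a"
  assumes ext_in_T: "\<And>t k. t \<in> T \<Longrightarrow> ext t k \<subseteq> T"
    and mono: "\<And>ti tj k t. ti \<in> T \<Longrightarrow> tj \<in> T \<Longrightarrow> le ti tj \<Longrightarrow> t \<in> ext tj k \<Longrightarrow>
                 \<exists>t' \<in> ext ti k. le t' t"
    and li_T: "fst li \<in> T" "snd li \<in> T"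
    and lj_T: "fst lj \<in> T" "snd lj \<in> T"
    and hle: "label_le_eq le li lj"
  shows "\<forall>l \<in> label_ext ext lj k. \<exists>l' \<in> label_ext ext li k. label_le_ne le l' l"
proof -
  have swap_T: "fst (prod.swap li) \<in> T" "snd (prod.swap li) \<in> T"
    using li_T by simp_all
  from hle consider "label_le_n le li lj" | "label_le_n le (prod.swap li) lj"
    unfolding label_le_eq_def label_le_x_iff_label_le_n_swap by blast
  then show ?thesis
  proof cases
    case 1
    show ?thesis by (rule label_ext_dominated_if_label_le_n[OF _ li_T lj_T 1]) (rule mono)
  next
    case 2
    have "\<forall>l \<in> label_ext ext lj k. \<exists>l' \<in> label_ext ext (prod.swap li) k. label_le_ne le l' l"
      by (rule label_ext_dominated_if_label_le_n[OF _ swap_T lj_T 2]) (rule mono)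
    then show ?thesis by simp
  qed
qed

end
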